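(* Let $N=(V,A)$ be a phylogenetic network on $X$. Then $$l(N)=p(N)=t(N)=(|V|-|X|)-m(\mathcal{G}_N),$$ where $m(\mathcal{G}_N)$ is the size of a maximum matching of $\mathcal{G}_N$.
   Context: $X$ is a nonempty finite set. A phylogenetic network on $X$ is a rooted acyclic digraph with no parallel arcs such that: the unique root has out-degree at least one; $X$ is exactly the set of vertices of out-degree zero (leaves), each of in-degree one; every other vertex either has in-degree one and out-degree at least two (a tree vertex) or in-degree at least two and out-degree one (a reticulation). If $|X|=1$, the network may also consist of the single vertex in $X$. A phylogenetic network $N$ on $X$ is tree-based if it can be obtained from some phylogenetic $X$-tree (phylogenetic network with no reticulations) $T$ by first taking a subdivision of $T$ (new vertices are attachment points) and then adding new arcs $(u,v)$ where either $u$ and $v$ are both attachment points, or $u$ is a non-leaf vertex of $T$ and $v$ is an attachment point; equivalently, $N$ has a rooted spanning tree with the same root as $N$ all of whose leaves lie in $X$. Attaching a new leaf to $N$ means subdividing an arc of $N$ with a new vertex $u$ and adding a new leaf $y$ and the arc $(u,y)$. Define: $l(N)$ is the minimum, over all spanning trees of $N$ rooted at the root of $N$, of the number of leaves of the spanning tree that lie in $V-X$; $p(N)=d(N)-|X|$ where $d(N)$ is the smallest number of vertex-disjoint directed paths of $N$ that partition $V$; $t(N)$ is the minimum number of new leaves that need to be attached (successively) to $N$ so that the resulting network is tree-based. For a digraph $D=(V,A)$, $\mathcal{G}_D$ is the bipartite graph with vertex bipartition $\{V_1,V_2\}$, where $V_1$ and $V_2$ are two disjoint copies of $V$, having an edge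 between the copy of $u$ in $V_1$ and the copy of $v$ in $V_2$ for each arc $(u,v)\in A$. *)

theory Defs
  imports Main
begin

definition indeg :: "('a \<times> 'a) set \<Rightarrow> 'a \<Rightarrow> nat" where
  "indeg A v = card {u. (u, v) \<in> A}"

definition outdeg :: "('a \<times> 'a) set \<Rightarrow> 'a \<Rightarrow> nat" where
  "outdeg A v = card {w. (v, w) \<in> A}"

text \<open>Phylogenetic network on X (arcs form a set, so there are no parallel arcs).\<close>
definition phylo_network :: "'a set \<Rightarrow> ('a \<times> 'a) set \<Rightarrow> 'a set \<Rightarrow> bool" where
  "phylo_network V A X \<longleftrightarrow>
     finite V \<and> A \<subseteq> V \<times> V \<and> acyclic A \<and> X \<noteq> {} \<and> X \<subseteq> V \<and>
     ((\<exists>r. V = {r} \<and> A = {} \<and> X = {r}) \<or>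
      (\<exists>r\<in>V. indeg A r = 0 \<and> outdeg A r \<ge> 1 \<and>
         (\<forall>v\<in>V. v \<noteq> r \<longrightarrow> indeg A v \<ge> 1) \<and>
         X = {v\<in>V. outdeg A v = 0} \<and>
         (\<forall>x\<in>X. indeg A x = 1) \<and>
         (\<forall>v\<in>V - X - {r}. (indeg A v = 1 \<and> outdeg A v \<ge> 2) \<or>
                             (indeg A v \<ge> 2 \<and> outdeg A v = 1))))"

definition root :: "'a set \<Rightarrow> ('a \<times> 'a) set \<Rightarrow> 'a" where
  "root V A = (THE r. r \<in> V \<and> indeg A r = 0)"

definition spanning_tree :: "'a set \<Rightarrow> ('a \<times> 'a) set \<Rightarrow> 'a \<Rightarrow> ('a \<times> 'a) set \<Rightarrow> bool" where
  "spanning_tree V A r T \<longleftrightarrow>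
     T \<subseteq> A \<and> (\<forall>u. (u, r) \<notin> T) \<and>
     (\<forall>v\<in>V. v \<noteq> r \<longrightarrow> card {u. (u, v) \<in> T} = 1) \<and>
     (\<forall>v\<in>V. (r, v) \<in> T\<^sup>*)"

definition tree_leaves :: "'a set \<Rightarrow> ('a \<times> 'a) set \<Rightarrow> 'a set" where
  "tree_leaves V T = {v\<in>V. \<forall>w. (v, w) \<notin> T}"

definition l_num :: "'a set \<Rightarrow> ('a \<times> 'a) set \<Rightarrow> 'a set \<Rightarrow> nat" where
  "l_num V A X = Min {card (tree_leaves V T - X) | T. spanning_tree V A (root V A) T}"

definition dpath :: "('a \<times> 'a) set \<Rightarrow> 'a list \<Rightarrow> bool" where
  "dpath A xs \<longleftrightarrow> xs \<noteq> [] \<and> distinct xs \<and> successively (\<lambda>u v. (u, v) \<in> A) xs"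

definition path_partition :: "'a set \<Rightarrow> ('a \<times> 'a) set \<Rightarrow> 'a list set \<Rightarrow> bool" where
  "path_partition V A P \<longleftrightarrow>
     finite P \<and> (\<forall>p\<in>P. dpath A p) \<and>
     (\<forall>p\<in>P. \<forall>q\<in>P. p \<noteq> q \<longrightarrow> set p \<inter> set q = {}) \<and>
     (\<Union>p\<in>P. set p) = V"

definition d_num :: "'a set \<Rightarrow> ('a \<times> 'a) set \<Rightarrow> nat" where
  "d_num V A = Min {card P | P. path_partition V A P}"

definition p_num :: "'a set \<Rightarrow> ('a \<times> 'a) set \<Rightarrow> 'a set \<Rightarrow> int" where
  "p_num V A X = int (d_num V A) - int (card X)"

text \<open>Tree-based (via the stated equivalent characterisation: a spanning tree
  rooted at the root of N all of whose leaves lie in X).\<close>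
definition tree_based :: "'a set \<Rightarrow> ('a \<times> 'a) set \<Rightarrow> 'a set \<Rightarrow> bool" where
  "tree_based V A X \<longleftrightarrow>
     (\<exists>T. spanning_tree V A (root V A) T \<and> tree_leaves V T \<subseteq> X)"

definition attach_leaf ::
  "('a set \<times> ('a \<times> 'a) set \<times> 'a set) \<Rightarrow> ('a set \<times> ('a \<times> 'a) set \<times> 'a set) \<Rightarrow> bool" where
  "attach_leaf N N' \<longleftrightarrow>
     (\<exists>V A X a b u y. N = (V, A, X) \<and> (a, b) \<in> A \<and> u \<notin> V \<and> y \<notin> V \<and> u \<noteq> y \<and>
        N' = (V \<union> {u, y}, (A - {(a, b)}) \<union> {(a, u), (u, b), (u, y)}, X \<union> {y}))"

text \<open>To have room for new vertices, the network is first embedded into the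
  vertex type 'a + nat (new vertices may then be taken from Inr).\<close>
definition lift_net :: "'a set \<Rightarrow> ('a \<times> 'a) set \<Rightarrow> 'a set \<Rightarrow>
    (('a + nat) set \<times> (('a + nat) \<times> ('a + nat)) set \<times> ('a + nat) set)" where
  "lift_net V A X = (Inl ` V, map_prod Inl Inl ` A, Inl ` X)"

definition t_num :: "'a set \<Rightarrow> ('a \<times> 'a) set \<Rightarrow> 'a set \<Rightarrow> nat" where
  "t_num V A X = (LEAST k. \<exists>V' A' X'. (attach_leaf ^^ k) (lift_net V A X) (V', A', X') \<and>
                                       tree_based V' A' X')"

text \<open>The bipartite graph G_N: vertices (v,False) in V1 and (v,True) in V2;
  one edge {(u,False),(v,True)} per arc (u,v).\<close>
definition bip_vertices :: "'a set \<Rightarrow> ('a \<times> bool) set" where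
  "bip_vertices V = V \<times> UNIV"

definition bip_edges :: "('a \<times> 'a) set \<Rightarrow> ('a \<times> bool) set set" where
  "bip_edges A = {{(u, False), (v, True)} | u v. (u, v) \<in> A}"

definition is_matching :: "'b set set \<Rightarrow> 'b set set \<Rightarrow> bool" where
  "is_matching E M \<longleftrightarrow> M \<subseteq> E \<and> (\<forall>e\<in>M. \<forall>e'\<in>M. e \<noteq> e' \<longrightarrow> e \<inter> e' = {})"

definition max_matching_size :: "'b set set \<Rightarrow> nat" where
  "max_matching_size E = Max {card M | M. is_matching E M}"

end

theory Submission
  imports Defs
begin

text \<open>
  Call a set of arcs with pairwise distinct tails and pairwise distinct heads an arc matching;
  these are exactly the matchings of the bipartite graph G_N. Let m be their maximum size.

  The arcs of a partition of V into k directed paths form an arc matching of size |V| - k, and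
  conversely, in an acyclic digraph, the arcs of an arc matching F glue the trivial paths into
  |V| - |F| paths; hence d(N) = |V| - m. Choosing one child of every inner vertex of a spanning
  tree gives an arc matching, so every spanning tree has at least |V| - m leaves. Conversely a
  maximum arc matching extends to a spanning tree by giving every vertex it does not enter an
  arbitrary parent; the leaves of that tree avoid the m tails of the matching. Since every
  vertex of X is a leaf of every spanning tree, l(N) = |V| - |X| - m.

  Attaching a leaf increases |V| by 2, |X| by 1 and m by at most 2, so it lowers the defect
  |V| - |X| - m by at most one, while a tree-based network has defect at most 0. Conversely,
  attaching a new leaf on an arc leaving each leaf outside X of an optimal spanning tree makes
  N tree-based, hence t(N) = |V| - |X| - m as well.
\<close>

section \<open>Arc matchings\<close>

lemma finite_arcs: "A \<subseteq> V \<times> V \<Longrightarrow> finite V \<Longrightarrow> finite A"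
  by (erule finite_subset) simp

definition arc_matching :: "('a \<times> 'a) set \<Rightarrow> ('a \<times> 'a) set \<Rightarrow> bool" where
  "arc_matching A F \<longleftrightarrow> F \<subseteq> A \<and> inj_on fst F \<and> inj_on snd F"

definition arc_matching_number :: "('a \<times> 'a) set \<Rightarrow> nat" where
  "arc_matching_number A = Max {card F | F. arc_matching A F}"

lemma arc_matching_subset: "arc_matching A F \<Longrightarrow> G \<subseteq> F \<Longrightarrow> G \<subseteq> B \<Longrightarrow> arc_matching B G"
  unfolding arc_matching_def by (blast intro: inj_on_subset)

lemma finite_arc_matching_cards:
  assumes "finite A" shows "finite {card F | F. arc_matching A F}"
proof (rule finite_subset)
  show "{card F | F. arc_matching A F} \<subseteq> {..card A}"
    using assms by (auto simp: arc_matching_def intro: card_mono)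
qed simp

lemma card_le_arc_matching_number:
  "finite A \<Longrightarrow> arc_matching A F \<Longrightarrow> card F \<le> arc_matching_number A"
  unfolding arc_matching_number_def by (rule Max_ge) (auto intro: finite_arc_matching_cards)

lemma maximum_arc_matching_exists:
  assumes "finite A" obtains F where "arc_matching A F" "card F = arc_matching_number A"
proof -
  have "arc_matching A {}" by (simp add: arc_matching_def)
  hence "arc_matching_number A \<in> {card F | F. arc_matching A F}"
    unfolding arc_matching_number_def using finite_arc_matching_cards[OF assms] by (intro Max_in) auto
  thus ?thesis using that by auto
qed

lemma cards_eq_if_image_correspondence:
  assumes "inj g"
    and "\<And>F. Q F \<Longrightarrow> P (g ` F)" and "\<And>M. P M \<Longrightarrow> \<exists>F. Q F \<and> M = g ` F"
  shows "{card M | M. P M} = {card F | F. Q F}"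
proof -
  have card_image_g: "card (g ` F) = card F" for F
    using assms(1) by (simp add: card_image inj_on_subset)
  show ?thesis
  proof (intro equalityI subsetI)
    fix n assume "n \<in> {card M | M. P M}"
    then obtain M where "P M" "n = card M" by blast
    then obtain F where "Q F" "M = g ` F" using assms(3) by blast
    moreover have "n = card F" using \<open>n = card M\<close> \<open>M = g ` F\<close> card_image_g by simp
    ultimately show "n \<in> {card F | F. Q F}" by blast
  next
    fix n assume "n \<in> {card F | F. Q F}"
    then obtain F where "Q F" "n = card F" by blast
    moreover have "P (g ` F)" using assms(2) \<open>Q F\<close> .
    moreover have "n = card (g ` F)" using \<open>n = card F\<close> card_image_g by simp
    ultimately show "n \<in> {card M | M. P M}" by blast
  qed
qed

lemma max_matching_size_bip_edges:
  "max_matching_size (bip_edges A) = arc_matching_number A"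
proof -
  define g :: "'a \<times> 'a \<Rightarrow> ('a \<times> bool) set" where "g e = {(fst e, False), (snd e, True)}" for e
  have "inj g" unfolding g_def inj_def by (simp add: doubleton_eq_iff prod_eq_iff)
  have edges: "bip_edges A = g ` A"
    unfolding bip_edges_def g_def by (auto simp: image_def) (metis fst_conv snd_conv, blast)
  have "{card M | M. is_matching (bip_edges A) M} = {card F | F. arc_matching A F}"
  proof (rule cards_eq_if_image_correspondence[OF \<open>inj g\<close>])
    fix F assume F: "arc_matching A F"
    have "g e \<inter> g e' = {}" if "e \<in> F" "e' \<in> F" "e \<noteq> e'" for e e'
      using F that inj_on_contraD[of fst F] inj_on_contraD[of snd F]
      unfolding arc_matching_def g_def by auto
    thus "is_matching (bip_edges A) (g ` F)"
      using F unfolding is_matching_def arc_matching_def edges by blast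
  next
    fix M assume M: "is_matching (bip_edges A) M"
    define F where "F = {e \<in> A. g e \<in> M}"
    have "M = g ` F" using M unfolding F_def is_matching_def edges by auto
    have overlap: "e = e'" if "e \<in> F" "e' \<in> F" "g e \<inter> g e' \<noteq> {}" for e e'
    proof -
      have "g e = g e'" using M that unfolding is_matching_def F_def by blast
      with \<open>inj g\<close> show "e = e'" by (rule injD)
    qed
    have "inj_on fst F" "inj_on snd F"
      by (rule inj_onI, rule overlap, auto simp: g_def)+
    hence "arc_matching A F" unfolding arc_matching_def F_def by auto
    with \<open>M = g ` F\<close> show "\<exists>F. arc_matching A F \<and> M = g ` F" by blast
  qed
  thus ?thesis unfolding max_matching_size_def arc_matching_number_def by simp
qed

lemma arc_matching_map_prod_iff:
  assumes "inj f"
  shows "arc_matching (map_prod f f ` A) (map_prod f f ` F) \<longleftrightarrow> arc_matching A F"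
proof -
  have inj: "inj (map_prod f f)" using assms assms by (rule prod.inj_map)
  have "fst (map_prod f f x) = fst (map_prod f f y) \<longleftrightarrow> fst x = fst y"
    "snd (map_prod f f x) = snd (map_prod f f y) \<longleftrightarrow> snd x = snd y" for x y
    using assms by (simp_all add: inj_eq)
  thus ?thesis unfolding arc_matching_def inj_on_def
    using inj by (simp add: inj_image_subset_iff inj_eq)
qed

lemma arc_matching_number_map_prod:
  assumes "inj f"
  shows "arc_matching_number (map_prod f f ` A) = arc_matching_number A"
proof -
  have inj: "inj (map_prod f f)" using assms assms by (rule prod.inj_map)
  have "{card M | M. arc_matching (map_prod f f ` A) M} = {card F | F. arc_matching A F}"
  proof (rule cards_eq_if_image_correspondence[OF inj])
    fix F assume "arc_matching A F"
    thus "arc_matching (map_prod f f ` A) (map_prod f f ` F)"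
      by (simp only: arc_matching_map_prod_iff[OF assms])
  next
    fix M assume M: "arc_matching (map_prod f f ` A) M"
    then obtain F where "M = map_prod f f ` F"
      unfolding arc_matching_def by (auto simp only: subset_image_iff)
    moreover have "arc_matching A F"
      using M \<open>M = map_prod f f ` F\<close> by (simp add: arc_matching_map_prod_iff[OF assms])
    ultimately show "\<exists>F. arc_matching A F \<and> M = map_prod f f ` F" by blast
  qed
  thus ?thesis unfolding arc_matching_number_def by simp
qed

section \<open>Path partitions\<close>

fun path_arcs :: "'a list \<Rightarrow> ('a \<times> 'a) list" where
  "path_arcs (x # y # zs) = (x, y) # path_arcs (y # zs)"
| "path_arcs _ = []"

lemma successively_iff_path_arcs: "successively (\<lambda>u v. (u, v) \<in> A) p \<longleftrightarrow> set (path_arcs p) \<subseteq> A"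
  by (induction p rule: path_arcs.induct) auto

lemma snd_path_arcs_in_tl: "e \<in> set (path_arcs p) \<Longrightarrow> snd e \<in> set (tl p)"
  by (induction p rule: path_arcs.induct) auto

lemma path_arcs_in_path: "e \<in> set (path_arcs p) \<Longrightarrow> fst e \<in> set p \<and> snd e \<in> set p"
  by (induction p rule: path_arcs.induct) auto

lemma length_path_arcs: "length (path_arcs p) = length p - 1"
  by (induction p rule: path_arcs.induct) auto

lemma distinct_path_arcs: "distinct p \<Longrightarrow> distinct (path_arcs p)"
  by (induction p rule: path_arcs.induct) (auto dest: path_arcs_in_path)

lemma inj_on_fst_path_arcs: "distinct p \<Longrightarrow> inj_on fst (set (path_arcs p))"
  by (induction p rule: path_arcs.induct) (auto dest: path_arcs_in_path)

lemma inj_on_snd_path_arcs: "distinct p \<Longrightarrow> inj_on snd (set (path_arcs p))"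
  by (induction p rule: path_arcs.induct) (auto dest: snd_path_arcs_in_tl)

lemma path_arcs_from: "x \<in> set p \<Longrightarrow> x \<noteq> last p \<Longrightarrow> \<exists>y. (x, y) \<in> set (path_arcs p)"
  by (induction p rule: path_arcs.induct) auto

lemma path_arcs_into: "x \<in> set p \<Longrightarrow> x \<noteq> hd p \<Longrightarrow> \<exists>y. (y, x) \<in> set (path_arcs p)"
proof (induction p rule: path_arcs.induct)
  case (1 x y zs)
  then show ?case by (cases "x = y") auto
qed auto

lemma set_path_arcs_append:
  "p \<noteq> [] \<Longrightarrow> q \<noteq> [] \<Longrightarrow>
   set (path_arcs (p @ q)) = insert (last p, hd q) (set (path_arcs p) \<union> set (path_arcs q))"
proof (induction p)
  case (Cons x p)
  then show ?case by (cases p; cases q) auto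
qed simp

lemma hd_last_rtrancl_path_arcs: "set (path_arcs p) \<subseteq> A \<Longrightarrow> p \<noteq> [] \<Longrightarrow> (hd p, last p) \<in> A\<^sup>*"
proof (induction p rule: path_arcs.induct)
  case (1 x y zs)
  then show ?case by (auto intro: converse_rtrancl_into_rtrancl)
qed auto

lemma path_partition_arc_matching:
  assumes P: "path_partition V A P"
  shows "arc_matching A (\<Union>p\<in>P. set (path_arcs p))"
proof -
  have dpath: "\<And>p. p \<in> P \<Longrightarrow> dpath A p"
    and disjoint: "\<And>p q. p \<in> P \<Longrightarrow> q \<in> P \<Longrightarrow> p \<noteq> q \<Longrightarrow> set p \<inter> set q = {}"
    using P unfolding path_partition_def by auto
  have inj_on_union: "inj_on h (\<Union>p\<in>P. set (path_arcs p))"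
    if inj: "\<And>p. dpath A p \<Longrightarrow> inj_on h (set (path_arcs p))"
      and on_path: "\<And>e p. e \<in> set (path_arcs p) \<Longrightarrow> h e \<in> set p" for h :: "'a \<times> 'a \<Rightarrow> 'a"
  proof (rule inj_onI)
    fix e e' assume "e \<in> (\<Union>p\<in>P. set (path_arcs p))" "e' \<in> (\<Union>p\<in>P. set (path_arcs p))" "h e = h e'"
    then obtain p q where "p \<in> P" "e \<in> set (path_arcs p)" "q \<in> P" "e' \<in> set (path_arcs q)"
      by blast
    moreover have "h e \<in> set p \<inter> set q"
      using on_path calculation \<open>h e = h e'\<close> by (metis IntI)
    hence "p = q" using disjoint \<open>p \<in> P\<close> \<open>q \<in> P\<close> by blast
    ultimately show "e = e'"
      using inj_onD[OF inj[OF dpath[OF \<open>p \<in> P\<close>]] \<open>h e = h e'\<close>] by simp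
  qed
  show ?thesis
    unfolding arc_matching_def
  proof (intro conjI inj_on_union)
    show "(\<Union>p\<in>P. set (path_arcs p)) \<subseteq> A"
      using dpath by (auto simp: dpath_def successively_iff_path_arcs)
  qed (simp_all add: dpath_def inj_on_fst_path_arcs inj_on_snd_path_arcs path_arcs_in_path)
qed

lemma card_path_partition:
  assumes P: "path_partition V A P"
  shows "card (\<Union>p\<in>P. set (path_arcs p)) + card P = card V"
proof -
  have "finite P" and dpath: "\<And>p. p \<in> P \<Longrightarrow> dpath A p"
    and disjoint: "\<And>p q. p \<in> P \<Longrightarrow> q \<in> P \<Longrightarrow> p \<noteq> q \<Longrightarrow> set p \<inter> set q = {}"
    and V: "V = (\<Union>p\<in>P. set p)"
    using P unfolding path_partition_def by auto
  have arcs_disjoint: "set (path_arcs p) \<inter> set (path_arcs q) = {}"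
    if "p \<in> P" "q \<in> P" "p \<noteq> q" for p q
    using disjoint[OF that] path_arcs_in_path by blast
  have "card (\<Union>p\<in>P. set (path_arcs p)) + card P = (\<Sum>p\<in>P. length p - 1) + (\<Sum>p\<in>P. 1)"
    using \<open>finite P\<close> arcs_disjoint dpath
    by (simp add: card_UN_disjoint dpath_def distinct_card distinct_path_arcs length_path_arcs)
  also have "\<dots> = (\<Sum>p\<in>P. length p)"
    unfolding sum.distrib[symmetric] using dpath by (intro sum.cong) (auto simp: dpath_def)
  also have "\<dots> = card V"
    using \<open>finite P\<close> disjoint dpath unfolding V
    by (simp add: card_UN_disjoint dpath_def distinct_card)
  finally show ?thesis .
qed

lemma path_partition_merge:
  assumes P: "path_partition V A P" and "p \<in> P" "q \<in> P" "p \<noteq> q" and "(last p, hd q) \<in> A"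
  shows "path_partition V A (insert (p @ q) (P - {p, q}))"
proof -
  have "finite P" and dpath: "\<And>p. p \<in> P \<Longrightarrow> dpath A p"
    and disjoint: "\<And>p q. p \<in> P \<Longrightarrow> q \<in> P \<Longrightarrow> p \<noteq> q \<Longrightarrow> set p \<inter> set q = {}"
    and V: "V = (\<Union>p\<in>P. set p)"
    using P unfolding path_partition_def by auto
  have "dpath A (p @ q)"
    using dpath[OF \<open>p \<in> P\<close>] dpath[OF \<open>q \<in> P\<close>] disjoint[OF assms(2-4)] assms(5)
    by (simp add: dpath_def successively_append_iff)
  moreover have "set (p @ q) \<inter> set r = {}" "set r \<inter> set (p @ q) = {}" if "r \<in> P - {p, q}" for r
    using that disjoint[of p r] disjoint[of q r] \<open>p \<in> P\<close> \<open>q \<in> P\<close> by auto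
  moreover have "(\<Union>r\<in>insert (p @ q) (P - {p, q}). set r) = V"
    using \<open>p \<in> P\<close> \<open>q \<in> P\<close> unfolding V by auto
  ultimately show ?thesis
    using \<open>finite P\<close> dpath disjoint unfolding path_partition_def by auto
qed

lemma last_path_if_arc_matching_insert:
  assumes "arc_matching A (insert (a, b) F)" "(a, b) \<notin> F" "set (path_arcs p) \<subseteq> F" "a \<in> set p"
  shows "a = last p"
proof (rule ccontr)
  assume "a \<noteq> last p"
  then obtain c where "(a, c) \<in> F" using path_arcs_from[OF assms(4)] assms(3) by blast
  hence "(a, c) = (a, b)"
    using assms(1) inj_onD[of fst "insert (a, b) F" "(a, c)" "(a, b)"] unfolding arc_matching_def by simp
  thus False using \<open>(a, c) \<in> F\<close> \<open>(a, b) \<notin> F\<close> by simp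
qed

lemma hd_path_if_arc_matching_insert:
  assumes "arc_matching A (insert (a, b) F)" "(a, b) \<notin> F" "set (path_arcs q) \<subseteq> F" "b \<in> set q"
  shows "b = hd q"
proof (rule ccontr)
  assume "b \<noteq> hd q"
  then obtain c where "(c, b) \<in> F" using path_arcs_into[OF assms(4)] assms(3) by blast
  hence "(c, b) = (a, b)"
    using assms(1) inj_onD[of snd "insert (a, b) F" "(c, b)" "(a, b)"] unfolding arc_matching_def by simp
  thus False using \<open>(c, b) \<in> F\<close> \<open>(a, b) \<notin> F\<close> by simp
qed

lemma path_partition_insert_arc:
  assumes P: "path_partition V A P" and "A \<subseteq> V \<times> V" "acyclic A"
    and arcs: "(\<Union>p\<in>P. set (path_arcs p)) = F"
    and F: "arc_matching A (insert (a, b) F)" "(a, b) \<notin> F"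
  shows "\<exists>P'. path_partition V A P' \<and> (\<Union>p\<in>P'. set (path_arcs p)) = insert (a, b) F"
proof -
  have "(a, b) \<in> A" using F(1) unfolding arc_matching_def by blast
  hence "a \<in> V" "b \<in> V" using \<open>A \<subseteq> V \<times> V\<close> by auto
  then obtain p q where "p \<in> P" "a \<in> set p" "q \<in> P" "b \<in> set q"
    using P unfolding path_partition_def by blast
  have "set (path_arcs p) \<subseteq> F" "set (path_arcs q) \<subseteq> F"
    using arcs \<open>p \<in> P\<close> \<open>q \<in> P\<close> by blast+
  have "a = last p" by (rule last_path_if_arc_matching_insert[OF F \<open>set (path_arcs p) \<subseteq> F\<close> \<open>a \<in> set p\<close>])
  have "b = hd q" by (rule hd_path_if_arc_matching_insert[OF F \<open>set (path_arcs q) \<subseteq> F\<close> \<open>b \<in> set q\<close>])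
  have "p \<noteq> []" "q \<noteq> []" using \<open>a \<in> set p\<close> \<open>b \<in> set q\<close> by auto
  have "p \<noteq> q"
  proof
    assume "p = q"
    have "dpath A p" using P \<open>p \<in> P\<close> unfolding path_partition_def by blast
    hence "(hd p, last p) \<in> A\<^sup>*"
      using hd_last_rtrancl_path_arcs by (auto simp: dpath_def successively_iff_path_arcs)
    hence "(b, a) \<in> A\<^sup>*" using \<open>a = last p\<close> \<open>b = hd q\<close> \<open>p = q\<close> by simp
    with \<open>(a, b) \<in> A\<close> have "(a, a) \<in> A\<^sup>+" by (rule rtrancl_into_trancl2)
    thus False using \<open>acyclic A\<close> unfolding acyclic_def by blast
  qed
  have "(last p, hd q) \<in> A" using \<open>(a, b) \<in> A\<close> \<open>a = last p\<close> \<open>b = hd q\<close> by simp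
  with P \<open>p \<in> P\<close> \<open>q \<in> P\<close> \<open>p \<noteq> q\<close>
  have "path_partition V A (insert (p @ q) (P - {p, q}))" by (rule path_partition_merge)
  moreover have "(\<Union>r\<in>insert (p @ q) (P - {p, q}). set (path_arcs r)) = insert (a, b) F"
  proof -
    have "F = set (path_arcs p) \<union> set (path_arcs q) \<union> (\<Union>r\<in>P - {p, q}. set (path_arcs r))"
      using arcs \<open>p \<in> P\<close> \<open>q \<in> P\<close> by blast
    thus ?thesis
      using set_path_arcs_append[OF \<open>p \<noteq> []\<close> \<open>q \<noteq> []\<close>] \<open>a = last p\<close> \<open>b = hd q\<close> by simp
  qed
  ultimately show ?thesis by blast
qed

lemma arc_matching_path_partition:
  assumes "finite V" "A \<subseteq> V \<times> V" "acyclic A" and F: "arc_matching A F"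
  shows "\<exists>P. path_partition V A P \<and> (\<Union>p\<in>P. set (path_arcs p)) = F"
proof -
  have "finite A" using \<open>A \<subseteq> V \<times> V\<close> \<open>finite V\<close> by (rule finite_arcs)
  hence "finite F" using F finite_subset unfolding arc_matching_def by blast
  from this F show ?thesis
  proof (induction F rule: finite_induct)
    case empty
    have "path_partition V A ((\<lambda>v. [v]) ` V)"
      using \<open>finite V\<close> unfolding path_partition_def dpath_def by auto
    moreover have "(\<Union>p\<in>(\<lambda>v. [v]) ` V. set (path_arcs p)) = {}" by simp
    ultimately show ?case by blast
  next
    case (insert e F)
    obtain a b where e: "e = (a, b)" by fastforce
    have "arc_matching A F"
      using arc_matching_subset[OF insert.prems, of F] insert.prems unfolding arc_matching_def by blast
    then obtain P where "path_partition V A P" "(\<Union>p\<in>P. set (path_arcs p)) = F"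
      using insert.IH by blast
    from path_partition_insert_arc[OF this(1) assms(2,3) this(2)] insert.prems insert.hyps(2)
    show ?case unfolding e by blast
  qed
qed

lemma d_num_add_arc_matching_number:
  assumes "finite V" "A \<subseteq> V \<times> V" "acyclic A"
  shows "d_num V A + arc_matching_number A = card V"
proof -
  have "finite A" using \<open>A \<subseteq> V \<times> V\<close> \<open>finite V\<close> by (rule finite_arcs)
  let ?S = "{card P | P. path_partition V A P}"
  have lower: "card V - arc_matching_number A \<le> n" if "n \<in> ?S" for n
  proof -
    from that obtain P where P: "path_partition V A P" "n = card P" by blast
    have "card (\<Union>p\<in>P. set (path_arcs p)) \<le> arc_matching_number A"
      using card_le_arc_matching_number[OF \<open>finite A\<close> path_partition_arc_matching[OF P(1)]] .
    thus ?thesis using card_path_partition[OF P(1)] P(2) by linarith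
  qed
  obtain F where F: "arc_matching A F" "card F = arc_matching_number A"
    using maximum_arc_matching_exists[OF \<open>finite A\<close>] .
  then obtain P where P: "path_partition V A P" "(\<Union>p\<in>P. set (path_arcs p)) = F"
    using arc_matching_path_partition[OF assms] by blast
  hence "card P + arc_matching_number A = card V" using card_path_partition[OF P(1)] F(2) by simp
  hence "card V - arc_matching_number A \<in> ?S" using P(1) by force
  moreover have "?S \<subseteq> {..card V}" by (auto dest: card_path_partition)
  ultimately have "d_num V A = card V - arc_matching_number A"
    unfolding d_num_def using lower by (intro Min_eqI) (auto intro: finite_subset)
  thus ?thesis using \<open>card P + arc_matching_number A = card V\<close> by linarith
qed

section \<open>Spanning trees\<close>

definition rooted_digraph :: "'a set \<Rightarrow> ('a \<times> 'a) set \<Rightarrow> 'a set \<Rightarrow> 'a \<Rightarrow> bool" where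
  "rooted_digraph V A X r \<longleftrightarrow> finite V \<and> A \<subseteq> V \<times> V \<and> r \<in> V \<and> (\<forall>u. (u, r) \<notin> A) \<and>
     (\<forall>v\<in>V. v \<noteq> r \<longrightarrow> (\<exists>u. (u, v) \<in> A)) \<and> X = {v \<in> V. \<forall>w. (v, w) \<notin> A}"

lemma indeg_eq_0_iff: "finite A \<Longrightarrow> indeg A v = 0 \<longleftrightarrow> (\<forall>u. (u, v) \<notin> A)"
proof -
  assume "finite A"
  have "finite {u. (u, v) \<in> A}"
    using finite_imageI[OF \<open>finite A\<close>, of fst] by (rule finite_subset[rotated]) force
  thus ?thesis unfolding indeg_def by simp
qed

lemma outdeg_eq_0_iff: "finite A \<Longrightarrow> outdeg A v = 0 \<longleftrightarrow> (\<forall>w. (v, w) \<notin> A)"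
proof -
  assume "finite A"
  have "finite {w. (v, w) \<in> A}"
    using finite_imageI[OF \<open>finite A\<close>, of snd] by (rule finite_subset[rotated]) force
  thus ?thesis unfolding outdeg_def by simp
qed

lemma root_eq:
  assumes "rooted_digraph V A X r" shows "root V A = r"
proof -
  have "finite A" using assms finite_arcs unfolding rooted_digraph_def by metis
  have "v \<in> V \<and> (\<forall>u. (u, v) \<notin> A) \<longleftrightarrow> v = r" for v
    using assms unfolding rooted_digraph_def by blast
  thus ?thesis unfolding root_def by (simp add: indeg_eq_0_iff[OF \<open>finite A\<close>])
qed

lemma sinks_subset_tree_leaves: "rooted_digraph V A X r \<Longrightarrow> T \<subseteq> A \<Longrightarrow> X \<subseteq> tree_leaves V T"
  unfolding rooted_digraph_def tree_leaves_def by blast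

lemma inj_on_snd_spanning_tree:
  assumes T: "spanning_tree V A r T" and "A \<subseteq> V \<times> V" shows "inj_on snd T"
proof (rule inj_onI)
  fix e e' assume "e \<in> T" "e' \<in> T" "snd e = snd e'"
  then obtain u u' w where e: "e = (u, w)" "e' = (u', w)" by (metis prod.collapse)
  have "w \<in> V" "w \<noteq> r"
    using T \<open>A \<subseteq> V \<times> V\<close> \<open>e \<in> T\<close> unfolding e spanning_tree_def by auto
  hence "card {z. (z, w) \<in> T} = 1" using T unfolding spanning_tree_def by blast
  then obtain p where "{z. (z, w) \<in> T} = {p}" by (rule card_1_singletonE)
  thus "e = e'" using \<open>e \<in> T\<close> \<open>e' \<in> T\<close> unfolding e by (auto simp: set_eq_iff)
qed

lemma card_le_tree_leaves_add_arc_matching_number: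
  assumes "finite V" "A \<subseteq> V \<times> V" and T: "spanning_tree V A r T"
  shows "card V \<le> card (tree_leaves V T) + arc_matching_number A"
proof -
  have "finite A" using assms(1,2) by (rule finite_arcs[rotated])
  define inner where "inner = V - tree_leaves V T"
  define child where "child v = (SOME w. (v, w) \<in> T)" for v
  have child: "(v, child v) \<in> T" if "v \<in> inner" for v
    using that unfolding inner_def tree_leaves_def child_def by (auto intro: someI_ex)
  define F where "F = (\<lambda>v. (v, child v)) ` inner"
  have "F \<subseteq> T" unfolding F_def using child by blast
  have "arc_matching A F"
    unfolding arc_matching_def
  proof (intro conjI)
    show "F \<subseteq> A" using \<open>F \<subseteq> T\<close> T unfolding spanning_tree_def by blast
    show "inj_on fst F" unfolding F_def by (rule inj_on_imageI) (simp add: comp_def)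
    show "inj_on snd F" using inj_on_snd_spanning_tree[OF T assms(2)] \<open>F \<subseteq> T\<close> by (rule inj_on_subset)
  qed
  moreover have "card F = card inner" unfolding F_def by (rule card_image) (simp add: inj_on_def)
  moreover have "card V = card inner + card (tree_leaves V T)"
  proof -
    have "tree_leaves V T \<subseteq> V" unfolding tree_leaves_def by blast
    thus ?thesis unfolding inner_def
      using card_Diff_subset[OF finite_subset[OF _ \<open>finite V\<close>]] card_mono[OF \<open>finite V\<close>] by (metis le_add_diff_inverse2)
  qed
  ultimately show ?thesis using card_le_arc_matching_number[OF \<open>finite A\<close>, of F] by linarith
qed

lemma rtrancl_from_root_if_parents:
  assumes "wf T" and parent: "\<And>v. v \<in> V \<Longrightarrow> v \<noteq> r \<Longrightarrow> \<exists>u\<in>V. (u, v) \<in> T"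
  shows "v \<in> V \<Longrightarrow> (r, v) \<in> T\<^sup>*"
  using \<open>wf T\<close>
proof (induction v rule: wf_induct_rule)
  case (less v)
  show ?case
  proof (cases "v = r")
    case False
    then obtain u where "u \<in> V" "(u, v) \<in> T" using parent \<open>v \<in> V\<close> by blast
    with less.IH show ?thesis by (blast intro: rtrancl_into_rtrancl)
  qed simp
qed

lemma spanning_tree_if_unique_parents:
  assumes "finite A" "acyclic A" "A \<subseteq> V \<times> V" "T \<subseteq> A" "\<forall>u. (u, r) \<notin> A"
    and one_parent: "\<And>v. v \<in> V \<Longrightarrow> v \<noteq> r \<Longrightarrow> card {u. (u, v) \<in> T} = 1"
  shows "spanning_tree V A r T"
proof -
  have "(r, v) \<in> T\<^sup>*" if "v \<in> V" for v
  proof (rule rtrancl_from_root_if_parents[OF _ _ that])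
    have "finite T" using \<open>T \<subseteq> A\<close> \<open>finite A\<close> by (rule finite_subset)
    moreover have "acyclic T" using \<open>acyclic A\<close> \<open>T \<subseteq> A\<close> by (rule acyclic_subset)
    ultimately show "wf T" by (rule finite_acyclic_wf)
    show "\<exists>u\<in>V. (u, w) \<in> T" if w: "w \<in> V" "w \<noteq> r" for w
    proof -
      obtain u where "{u'. (u', w) \<in> T} = {u}" using one_parent[OF w] by (rule card_1_singletonE)
      hence "(u, w) \<in> T" by blast
      moreover have "u \<in> V" using calculation \<open>T \<subseteq> A\<close> \<open>A \<subseteq> V \<times> V\<close> by blast
      ultimately show ?thesis by blast
    qed
  qed
  thus ?thesis unfolding spanning_tree_def using assms(4,5) one_parent by blast
qed

lemma spanning_tree_extending_arc_matching:
  assumes G: "rooted_digraph V A X r" and "acyclic A" and F: "arc_matching A F"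
  obtains T where "spanning_tree V A r T" "F \<subseteq> T"
proof -
  have "finite V" and AV: "A \<subseteq> V \<times> V" and no_parent: "\<forall>u. (u, r) \<notin> A"
    and parent: "\<forall>v\<in>V. v \<noteq> r \<longrightarrow> (\<exists>u. (u, v) \<in> A)"
    using G unfolding rooted_digraph_def by auto
  have "finite A" using AV \<open>finite V\<close> by (rule finite_arcs)
  have "F \<subseteq> A" and inj: "inj_on snd F" using F unfolding arc_matching_def by auto
  define pa where "pa v = (SOME u. (u, v) \<in> A)" for v
  have pa: "(pa v, v) \<in> A" if "v \<in> V" "v \<noteq> r" for v
    using parent that unfolding pa_def by (auto intro: someI_ex)
  define T where "T = F \<union> {(pa v, v) | v. v \<in> V \<and> v \<noteq> r \<and> v \<notin> snd ` F}"
  have "T \<subseteq> A" unfolding T_def using \<open>F \<subseteq> A\<close> pa by blast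
  have mem_T: "(u, w) \<in> T \<longleftrightarrow> (u, w) \<in> F \<or> (u = pa w \<and> w \<in> V \<and> w \<noteq> r \<and> w \<notin> snd ` F)"
    for u w unfolding T_def by blast
  have one_parent: "card {u. (u, v) \<in> T} = 1" if "v \<in> V" "v \<noteq> r" for v
  proof (cases "v \<in> snd ` F")
    case True
    then obtain u where "(u, v) \<in> F" by (auto elim!: imageE)
    have "u' = u" if "(u', v) \<in> F" for u'
      using inj_onD[OF inj, of "(u', v)" "(u, v)"] that \<open>(u, v) \<in> F\<close> by simp
    with \<open>(u, v) \<in> F\<close> have "{u'. (u', v) \<in> F} = {u}" by blast
    moreover have "{u'. (u', v) \<in> T} = {u'. (u', v) \<in> F}" using True by (simp add: mem_T)
    ultimately have "{u'. (u', v) \<in> T} = {u}" by simp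
    thus ?thesis by simp
  next
    case False
    hence "(u, v) \<notin> F" for u using rev_image_eqI[of "(u, v)" F v snd] by auto
    hence "{u'. (u', v) \<in> T} = {pa v}" using that False by (simp add: mem_T)
    thus ?thesis by simp
  qed
  have "spanning_tree V A r T"
    using \<open>finite A\<close> \<open>acyclic A\<close> AV \<open>T \<subseteq> A\<close> no_parent one_parent
    by (rule spanning_tree_if_unique_parents)
  moreover have "F \<subseteq> T" unfolding T_def by blast
  ultimately show ?thesis by (rule that)
qed

lemma card_tree_leaves_add_le:
  assumes "finite V" "A \<subseteq> V \<times> V" and F: "arc_matching A F" and "F \<subseteq> T"
  shows "card (tree_leaves V T) + card F \<le> card V"
proof -
  have "fst ` F \<subseteq> V" using F \<open>A \<subseteq> V \<times> V\<close> unfolding arc_matching_def by auto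
  moreover have "tree_leaves V T \<inter> fst ` F = {}"
    using \<open>F \<subseteq> T\<close> unfolding tree_leaves_def by force
  moreover have "tree_leaves V T \<subseteq> V" unfolding tree_leaves_def by blast
  ultimately have "card (tree_leaves V T) + card (fst ` F) = card (tree_leaves V T \<union> fst ` F)"
    using \<open>finite V\<close> by (simp add: card_Un_disjoint finite_subset)
  also have "\<dots> \<le> card V"
    using \<open>finite V\<close> \<open>fst ` F \<subseteq> V\<close> \<open>tree_leaves V T \<subseteq> V\<close> by (simp add: card_mono)
  finally have "card (tree_leaves V T) + card (fst ` F) \<le> card V" .
  moreover have "card (fst ` F) = card F"
    using F unfolding arc_matching_def by (simp add: card_image)
  ultimately show ?thesis by simp
qed

lemma card_tree_leaves_diff_sinks:
  assumes "rooted_digraph V A X r" "T \<subseteq> A"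
  shows "card (tree_leaves V T - X) + card X = card (tree_leaves V T)"
proof -
  have "finite (tree_leaves V T)"
    using assms(1) unfolding rooted_digraph_def tree_leaves_def by simp
  moreover have "X \<subseteq> tree_leaves V T" using assms by (rule sinks_subset_tree_leaves)
  ultimately show ?thesis by (metis card_Diff_subset card_mono finite_subset le_add_diff_inverse2)
qed

lemma optimal_spanning_tree_exists:
  assumes G: "rooted_digraph V A X r" and "acyclic A"
  obtains T where "spanning_tree V A r T"
    "card (tree_leaves V T - X) + card X + arc_matching_number A = card V"
proof -
  have "finite V" "A \<subseteq> V \<times> V" using G unfolding rooted_digraph_def by auto
  hence "finite A" by (rule finite_arcs[rotated])
  obtain F where F: "arc_matching A F" "card F = arc_matching_number A"
    using maximum_arc_matching_exists[OF \<open>finite A\<close>] .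
  obtain T where T: "spanning_tree V A r T" "F \<subseteq> T"
    using spanning_tree_extending_arc_matching[OF G \<open>acyclic A\<close> F(1)] .
  have "T \<subseteq> A" using T(1) unfolding spanning_tree_def by blast
  have "card (tree_leaves V T) + arc_matching_number A = card V"
    using card_tree_leaves_add_le[OF \<open>finite V\<close> \<open>A \<subseteq> V \<times> V\<close> F(1) T(2)] F(2)
      card_le_tree_leaves_add_arc_matching_number[OF \<open>finite V\<close> \<open>A \<subseteq> V \<times> V\<close> T(1)]
    by linarith
  with card_tree_leaves_diff_sinks[OF G \<open>T \<subseteq> A\<close>] show ?thesis using that T(1) by simp
qed

lemma l_num_add_arc_matching_number:
  assumes G: "rooted_digraph V A X r" and "acyclic A"
  shows "l_num V A X + card X + arc_matching_number A = card V"
proof -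
  have "finite V" "A \<subseteq> V \<times> V" using G unfolding rooted_digraph_def by auto
  let ?S = "{card (tree_leaves V T - X) | T. spanning_tree V A r T}"
  obtain T0 where T0: "spanning_tree V A r T0"
    "card (tree_leaves V T0 - X) + card X + arc_matching_number A = card V"
    using optimal_spanning_tree_exists[OF G \<open>acyclic A\<close>] .
  have lower: "card (tree_leaves V T0 - X) \<le> n" if "n \<in> ?S" for n
  proof -
    from that obtain T where T: "spanning_tree V A r T" "n = card (tree_leaves V T - X)" by blast
    hence "T \<subseteq> A" unfolding spanning_tree_def by blast
    have "card V \<le> card (tree_leaves V T) + arc_matching_number A"
      using \<open>finite V\<close> \<open>A \<subseteq> V \<times> V\<close> T(1) by (rule card_le_tree_leaves_add_arc_matching_number)
    thus ?thesis
      using card_tree_leaves_diff_sinks[OF G \<open>T \<subseteq> A\<close>] T(2) T0(2) by linarith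
  qed
  have "?S \<subseteq> {..card V}"
  proof
    fix n assume "n \<in> ?S"
    then obtain T where "n = card (tree_leaves V T - X)" by blast
    moreover have "tree_leaves V T - X \<subseteq> V" unfolding tree_leaves_def by blast
    ultimately show "n \<in> {..card V}" using card_mono[OF \<open>finite V\<close>] by simp
  qed
  hence "Min ?S = card (tree_leaves V T0 - X)"
    using T0(1) lower by (intro Min_eqI) (auto intro: finite_subset)
  thus ?thesis unfolding l_num_def root_eq[OF G] using T0(2) by simp
qed

section \<open>Attaching leaves\<close>

fun finite_net :: "'a set \<times> ('a \<times> 'a) set \<times> 'a set \<Rightarrow> bool" where
  "finite_net (V, A, X) \<longleftrightarrow> finite V \<and> A \<subseteq> V \<times> V \<and> X \<subseteq> V"

fun matching_defect :: "'a set \<times> ('a \<times> 'a) set \<times> 'a set \<Rightarrow> int" where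
  "matching_defect (V, A, X) = int (card V) - int (card X) - int (arc_matching_number A)"

lemma arc_matching_number_subdivide_le:
  assumes "finite A"
  shows "arc_matching_number ((A - {(a, b)}) \<union> {(a, u), (u, b), (u, y)}) \<le> arc_matching_number A + 2"
    (is "arc_matching_number ?A' \<le> _")
proof -
  define S where "S = {(a, u), (u, b), (u, y)}"
  obtain F' where F': "arc_matching ?A' F'" "card F' = arc_matching_number ?A'"
    using maximum_arc_matching_exists[of ?A'] \<open>finite A\<close> by auto
  have "F' - S \<subseteq> A" using F'(1) unfolding arc_matching_def S_def by blast
  with arc_matching_subset[OF F'(1) Diff_subset] have "arc_matching A (F' - S)" .
  hence "card (F' - S) \<le> arc_matching_number A" using \<open>finite A\<close> by (rule card_le_arc_matching_number[rotated])
  moreover have "card (F' \<inter> S) \<le> 2"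
  proof -
    have "inj_on fst (F' \<inter> S)"
      using F'(1) inj_on_subset[OF _ Int_lower1] unfolding arc_matching_def by blast
    hence "card (F' \<inter> S) = card (fst ` (F' \<inter> S))" by (simp add: card_image)
    also have "\<dots> \<le> card {a, u}" by (rule card_mono) (auto simp: S_def)
    also have "\<dots> \<le> 2" by (simp add: card_insert_le_m1)
    finally show ?thesis .
  qed
  moreover have "card F' \<le> card (F' - S) + card (F' \<inter> S)"
    by (metis Un_Diff_Int card_Un_le)
  ultimately show ?thesis using F'(2) by linarith
qed

lemma attach_leaf_matching_defect:
  assumes "attach_leaf N N'" "finite_net N"
  shows "finite_net N' \<and> matching_defect N \<le> matching_defect N' + 1"
proof -
  obtain V A X a b u y where N: "N = (V, A, X)" and "(a, b) \<in> A" "u \<notin> V" "y \<notin> V" "u \<noteq> y"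
    and N': "N' = (V \<union> {u, y}, (A - {(a, b)}) \<union> {(a, u), (u, b), (u, y)}, X \<union> {y})"
    using assms(1) unfolding attach_leaf_def by blast
  have "finite V" "A \<subseteq> V \<times> V" "X \<subseteq> V" using assms(2) N by auto
  have "finite A" using \<open>A \<subseteq> V \<times> V\<close> \<open>finite V\<close> by (rule finite_arcs)
  have "card (V \<union> {u, y}) = card V + 2" using \<open>finite V\<close> \<open>u \<notin> V\<close> \<open>y \<notin> V\<close> \<open>u \<noteq> y\<close> by simp
  moreover have "card (X \<union> {y}) = card X + 1"
  proof -
    have "y \<notin> X" using \<open>X \<subseteq> V\<close> \<open>y \<notin> V\<close> by blast
    thus ?thesis using finite_subset[OF \<open>X \<subseteq> V\<close> \<open>finite V\<close>] by simp
  qed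
  moreover have "finite_net N'"
    using \<open>finite V\<close> \<open>A \<subseteq> V \<times> V\<close> \<open>X \<subseteq> V\<close> \<open>(a, b) \<in> A\<close> unfolding N' by auto
  ultimately show ?thesis
    using arc_matching_number_subdivide_le[OF \<open>finite A\<close>, of a b u y] unfolding N N' by simp
qed

lemma relpowp_attach_leaf_matching_defect:
  "(attach_leaf ^^ k) N N' \<Longrightarrow> finite_net N \<Longrightarrow> finite_net N' \<and> matching_defect N \<le> matching_defect N' + int k"
proof (induction k arbitrary: N')
  case (Suc k)
  from Suc.prems(1) obtain N'' where "(attach_leaf ^^ k) N N''" "attach_leaf N'' N'"
    by (rule relpowp_Suc_E)
  with Suc.IH[of N''] Suc.prems(2) attach_leaf_matching_defect[of N'' N'] show ?case by auto
qed simp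

lemma tree_based_matching_defect_nonpos:
  assumes "finite_net (V, A, X)" "tree_based V A X"
  shows "matching_defect (V, A, X) \<le> 0"
proof -
  have "finite V" "A \<subseteq> V \<times> V" "X \<subseteq> V" using assms(1) by auto
  obtain T where T: "spanning_tree V A (root V A) T" "tree_leaves V T \<subseteq> X"
    using assms(2) unfolding tree_based_def by blast
  have "card (tree_leaves V T) \<le> card X"
    using card_mono[OF finite_subset[OF \<open>X \<subseteq> V\<close> \<open>finite V\<close>] T(2)] .
  thus ?thesis
    using card_le_tree_leaves_add_arc_matching_number[OF \<open>finite V\<close> \<open>A \<subseteq> V \<times> V\<close> T(1)] by simp
qed

lemma rooted_digraph_attach_leaf:
  assumes G: "rooted_digraph V A X r" and "(v, w) \<in> A" "u \<notin> V" "y \<notin> V" "u \<noteq> y"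
  shows "rooted_digraph (V \<union> {u, y}) ((A - {(v, w)}) \<union> {(v, u), (u, w), (u, y)}) (X \<union> {y}) r"
    (is "rooted_digraph ?V ?A ?X r")
proof -
  have "finite V" and AV: "A \<subseteq> V \<times> V" and "r \<in> V" and no_parent: "\<forall>z. (z, r) \<notin> A"
    and parent: "\<forall>x\<in>V. x \<noteq> r \<longrightarrow> (\<exists>z. (z, x) \<in> A)"
    and X: "X = {x \<in> V. \<forall>z. (x, z) \<notin> A}"
    using G unfolding rooted_digraph_def by auto
  have "v \<in> V" "w \<in> V" "w \<noteq> r" using \<open>(v, w) \<in> A\<close> AV no_parent by auto
  have "?A \<subseteq> ?V \<times> ?V" using AV \<open>v \<in> V\<close> \<open>w \<in> V\<close> by auto
  moreover have "\<forall>z. (z, r) \<notin> ?A" using no_parent \<open>w \<noteq> r\<close> \<open>u \<notin> V\<close> \<open>y \<notin> V\<close> \<open>r \<in> V\<close> by auto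
  moreover have "\<exists>z. (z, x) \<in> ?A" if "x \<in> ?V" "x \<noteq> r" for x
  proof (cases "x \<in> {u, y, w}")
    case False
    with that parent obtain z where "(z, x) \<in> A" by auto
    with False show ?thesis by blast
  qed auto
  moreover have "?X = {x \<in> ?V. \<forall>z. (x, z) \<notin> ?A}"
  proof -
    have "\<forall>z. (y, z) \<notin> A" "\<forall>z. (u, z) \<notin> A" using AV \<open>u \<notin> V\<close> \<open>y \<notin> V\<close> by auto
    moreover have "v \<notin> X" using X \<open>(v, w) \<in> A\<close> by blast
    ultimately show ?thesis unfolding X using \<open>u \<notin> V\<close> \<open>u \<noteq> y\<close> \<open>y \<notin> V\<close> \<open>v \<in> V\<close> by auto
  qed
  ultimately show ?thesis using \<open>finite V\<close> \<open>r \<in> V\<close> unfolding rooted_digraph_def by blast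
qed

lemma spanning_tree_attach_leaf:
  assumes T: "spanning_tree V A r T" and "A \<subseteq> V \<times> V" "r \<in> V"
    and "v \<in> V" "(v, w) \<notin> T" "u \<notin> V" "y \<notin> V" "u \<noteq> y"
  shows "spanning_tree (V \<union> {u, y}) ((A - {(v, w)}) \<union> {(v, u), (u, w), (u, y)}) r
           (insert (v, u) (insert (u, y) T))"
    (is "spanning_tree ?V ?A r ?T")
proof -
  have "T \<subseteq> A" and no_parent: "\<forall>z. (z, r) \<notin> T"
    and one_parent: "\<forall>x\<in>V. x \<noteq> r \<longrightarrow> card {z. (z, x) \<in> T} = 1"
    and reach: "\<forall>x\<in>V. (r, x) \<in> T\<^sup>*"
    using T unfolding spanning_tree_def by auto
  have TV: "T \<subseteq> V \<times> V" using \<open>T \<subseteq> A\<close> \<open>A \<subseteq> V \<times> V\<close> by blast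
  have "?T \<subseteq> ?A" using \<open>T \<subseteq> A\<close> \<open>(v, w) \<notin> T\<close> by blast
  moreover have "\<forall>z. (z, r) \<notin> ?T" using no_parent \<open>r \<in> V\<close> \<open>u \<notin> V\<close> \<open>y \<notin> V\<close> by auto
  moreover have "card {z. (z, x) \<in> ?T} = 1" if "x \<in> ?V" "x \<noteq> r" for x
  proof -
    consider "x \<in> V" | "x = u" | "x = y" using \<open>x \<in> ?V\<close> by blast
    thus ?thesis
    proof cases
      case 1
      hence "{z. (z, x) \<in> ?T} = {z. (z, x) \<in> T}" using \<open>u \<notin> V\<close> \<open>y \<notin> V\<close> by auto
      thus ?thesis using one_parent 1 \<open>x \<noteq> r\<close> by simp
    next
      case 2
      hence "{z. (z, x) \<in> ?T} = {v}" using TV \<open>u \<notin> V\<close> \<open>u \<noteq> y\<close> by auto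
      thus ?thesis by simp
    next
      case 3
      hence "{z. (z, x) \<in> ?T} = {u}" using TV \<open>y \<notin> V\<close> \<open>v \<in> V\<close> \<open>u \<noteq> y\<close> by auto
      thus ?thesis by simp
    qed
  qed
  moreover have "(r, x) \<in> ?T\<^sup>*" if "x \<in> ?V" for x
  proof -
    have "T\<^sup>* \<subseteq> ?T\<^sup>*" by (rule rtrancl_mono) blast
    hence "(r, v) \<in> ?T\<^sup>*" using reach \<open>v \<in> V\<close> by blast
    hence "(r, u) \<in> ?T\<^sup>*" by (rule rtrancl_into_rtrancl) simp
    hence "(r, y) \<in> ?T\<^sup>*" by (rule rtrancl_into_rtrancl) simp
    thus ?thesis using that reach \<open>T\<^sup>* \<subseteq> ?T\<^sup>*\<close> \<open>(r, u) \<in> ?T\<^sup>*\<close> by blast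
  qed
  ultimately show ?thesis unfolding spanning_tree_def by blast
qed

lemma attach_leaf_below_tree_leaf:
  fixes V :: "'a set"
  assumes "infinite (UNIV :: 'a set)" and G: "rooted_digraph V A X r" and T: "spanning_tree V A r T"
    and v: "v \<in> tree_leaves V T" "v \<notin> X"
  obtains V' A' X' T' where "attach_leaf (V, A, X) (V', A', X')" "rooted_digraph V' A' X' r"
    "spanning_tree V' A' r T'" "tree_leaves V' T' - X' = tree_leaves V T - X - {v}"
proof -
  have "finite V" "A \<subseteq> V \<times> V" "r \<in> V" and X: "X = {x \<in> V. \<forall>z. (x, z) \<notin> A}"
    using G unfolding rooted_digraph_def by auto
  have "v \<in> V" and leaf: "\<forall>z. (v, z) \<notin> T" using v(1) unfolding tree_leaves_def by auto
  then obtain w where "(v, w) \<in> A" using v(2) X by blast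
  obtain u where "u \<notin> V" using ex_new_if_finite[OF assms(1) \<open>finite V\<close>] by blast
  obtain y where "y \<notin> insert u V" using ex_new_if_finite[OF assms(1)] \<open>finite V\<close> by blast
  hence "y \<notin> V" "u \<noteq> y" by auto
  define V' where "V' = V \<union> {u, y}"
  define A' where "A' = (A - {(v, w)}) \<union> {(v, u), (u, w), (u, y)}"
  define X' where "X' = X \<union> {y}"
  define T' where "T' = insert (v, u) (insert (u, y) T)"
  have "attach_leaf (V, A, X) (V', A', X')"
    unfolding attach_leaf_def V'_def A'_def X'_def
    using \<open>(v, w) \<in> A\<close> \<open>u \<notin> V\<close> \<open>y \<notin> V\<close> \<open>u \<noteq> y\<close> by blast
  moreover have "rooted_digraph V' A' X' r"
    unfolding V'_def A'_def X'_def
    using rooted_digraph_attach_leaf[OF G \<open>(v, w) \<in> A\<close> \<open>u \<notin> V\<close> \<open>y \<notin> V\<close> \<open>u \<noteq> y\<close>] .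
  moreover have "spanning_tree V' A' r T'"
    unfolding V'_def A'_def T'_def
    using spanning_tree_attach_leaf[OF T \<open>A \<subseteq> V \<times> V\<close> \<open>r \<in> V\<close> \<open>v \<in> V\<close> _
        \<open>u \<notin> V\<close> \<open>y \<notin> V\<close> \<open>u \<noteq> y\<close>] leaf by blast
  moreover have "tree_leaves V' T' - X' = tree_leaves V T - X - {v}"
  proof -
    have "T \<subseteq> V \<times> V" using T \<open>A \<subseteq> V \<times> V\<close> unfolding spanning_tree_def by blast
    thus ?thesis
      unfolding tree_leaves_def V'_def T'_def X'_def using \<open>u \<notin> V\<close> \<open>y \<notin> V\<close> \<open>u \<noteq> y\<close> by auto
  qed
  ultimately show ?thesis by (rule that)
qed

lemma tree_based_by_attaching_leaves:
  fixes V :: "'a set"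
  assumes "infinite (UNIV :: 'a set)" "rooted_digraph V A X r" "spanning_tree V A r T"
  shows "\<exists>V' A' X'. (attach_leaf ^^ card (tree_leaves V T - X)) (V, A, X) (V', A', X') \<and>
           tree_based V' A' X'"
proof -
  have "card (tree_leaves V T - X) = k \<Longrightarrow>
    \<exists>V' A' X'. (attach_leaf ^^ k) (V, A, X) (V', A', X') \<and> tree_based V' A' X'" for k
    using assms(2,3)
  proof (induction k arbitrary: V A X T)
    case 0
    have "finite V" using 0(2) unfolding rooted_digraph_def by blast
    hence "tree_leaves V T \<subseteq> X" using 0(1) unfolding tree_leaves_def by simp
    hence "tree_based V A X" unfolding tree_based_def root_eq[OF 0(2)] using 0(3) by blast
    thus ?case by auto
  next
    case (Suc k)
    have "finite V" using Suc.prems(2) unfolding rooted_digraph_def by blast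
    have "tree_leaves V T - X \<noteq> {}" using Suc.prems(1) by (metis card.empty nat.distinct(1))
    then obtain v where v: "v \<in> tree_leaves V T" "v \<notin> X" by blast
    with assms(1) Suc.prems(2,3) obtain V' A' X' T' where step: "attach_leaf (V, A, X) (V', A', X')"
      and "rooted_digraph V' A' X' r" "spanning_tree V' A' r T'"
      and "tree_leaves V' T' - X' = tree_leaves V T - X - {v}"
      by (rule attach_leaf_below_tree_leaf)
    moreover from this(4) have "card (tree_leaves V' T' - X') = k"
      using Suc.prems(1) v \<open>finite V\<close> unfolding tree_leaves_def by simp
    ultimately obtain V'' A'' X'' where
      "(attach_leaf ^^ k) (V', A', X') (V'', A'', X'')" "tree_based V'' A'' X''"
      using Suc.IH by blast
    moreover from step this(1) have "(attach_leaf ^^ Suc k) (V, A, X) (V'', A'', X'')"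
      by (rule relpowp_Suc_I2)
    ultimately show ?case by blast
  qed
  thus ?thesis by blast
qed

lemma matching_defect_le_attached_leaves:
  assumes "finite_net N" "(attach_leaf ^^ k) N (V', A', X')" "tree_based V' A' X'"
  shows "matching_defect N \<le> int k"
proof -
  have "finite_net (V', A', X')" "matching_defect N \<le> matching_defect (V', A', X') + int k"
    using relpowp_attach_leaf_matching_defect[OF assms(2,1)] by auto
  moreover have "matching_defect (V', A', X') \<le> 0"
    using calculation(1) assms(3) by (rule tree_based_matching_defect_nonpos)
  ultimately show ?thesis by linarith
qed

lemma mem_map_prod_image_left:
  "inj f \<Longrightarrow> (f v, w) \<in> map_prod f f ` A \<longleftrightarrow> (\<exists>w'. w = f w' \<and> (v, w') \<in> A)"
  by (force simp: inj_eq)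

lemma mem_map_prod_image_right:
  "inj f \<Longrightarrow> (u, f v) \<in> map_prod f f ` A \<longleftrightarrow> (\<exists>u'. u = f u' \<and> (u', v) \<in> A)"
  by (force simp: inj_eq)

lemma rooted_digraph_image:
  assumes "inj f" and G: "rooted_digraph V A X r"
  shows "rooted_digraph (f ` V) (map_prod f f ` A) (f ` X) (f r)"
proof -
  have "finite V" and AV: "A \<subseteq> V \<times> V" and "r \<in> V" and no_parent: "\<forall>u. (u, r) \<notin> A"
    and parent: "\<forall>v\<in>V. v \<noteq> r \<longrightarrow> (\<exists>u. (u, v) \<in> A)" and X: "X = {v \<in> V. \<forall>w. (v, w) \<notin> A}"
    using G unfolding rooted_digraph_def by auto
  have "\<forall>u. (u, f r) \<notin> map_prod f f ` A"
    using no_parent by (simp add: mem_map_prod_image_right[OF \<open>inj f\<close>])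
  moreover have "\<forall>v\<in>f ` V. v \<noteq> f r \<longrightarrow> (\<exists>u. (u, v) \<in> map_prod f f ` A)"
    using parent by (auto simp: mem_map_prod_image_right[OF \<open>inj f\<close>])
  moreover have "f ` X = {v \<in> f ` V. \<forall>w. (v, w) \<notin> map_prod f f ` A}"
    unfolding X by (auto simp: mem_map_prod_image_left[OF \<open>inj f\<close>] inj_eq[OF \<open>inj f\<close>])
  moreover have "map_prod f f ` A \<subseteq> f ` V \<times> f ` V" using AV by auto
  ultimately show ?thesis using \<open>finite V\<close> \<open>r \<in> V\<close> unfolding rooted_digraph_def by blast
qed

lemma phylo_network_rooted_digraph:
  assumes "phylo_network V A X"
  obtains r where "rooted_digraph V A X r"
proof -
  have "finite V" "A \<subseteq> V \<times> V" using assms unfolding phylo_network_def by auto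
  hence "finite A" by (rule finite_arcs[rotated])
  have has_parent: "1 \<le> indeg A v \<longleftrightarrow> (\<exists>u. (u, v) \<in> A)" for v
    using indeg_eq_0_iff[OF \<open>finite A\<close>, of v] by (auto simp: Suc_le_eq)
  from assms consider (single) r where "V = {r}" "A = {}" "X = {r}"
    | (network) r where "r \<in> V" "indeg A r = 0" "\<forall>v\<in>V. v \<noteq> r \<longrightarrow> indeg A v \<ge> 1"
        "X = {v \<in> V. outdeg A v = 0}"
    unfolding phylo_network_def by blast
  thus ?thesis
  proof cases
    case single
    thus ?thesis using that unfolding rooted_digraph_def by auto
  next
    case network
    hence "rooted_digraph V A X r"
      using \<open>finite V\<close> \<open>A \<subseteq> V \<times> V\<close>
      unfolding rooted_digraph_def indeg_eq_0_iff[OF \<open>finite A\<close>, symmetric]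
        outdeg_eq_0_iff[OF \<open>finite A\<close>, symmetric] has_parent[symmetric] by auto
    thus ?thesis by (rule that)
  qed
qed

lemma Least_attach_leaf_tree_based:
  fixes V :: "'a set"
  assumes "infinite (UNIV :: 'a set)" and G: "rooted_digraph V A X r" and "acyclic A"
  shows "int (LEAST k. \<exists>V' A' X'. (attach_leaf ^^ k) (V, A, X) (V', A', X') \<and> tree_based V' A' X')
           = matching_defect (V, A, X)"
proof -
  define P where "P k \<longleftrightarrow> (\<exists>V' A' X'. (attach_leaf ^^ k) (V, A, X) (V', A', X') \<and> tree_based V' A' X')"
    for k
  have "finite_net (V, A, X)" using G unfolding rooted_digraph_def by auto
  obtain T where T: "spanning_tree V A r T"
    "card (tree_leaves V T - X) + card X + arc_matching_number A = card V"
    using optimal_spanning_tree_exists[OF G \<open>acyclic A\<close>] .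
  from tree_based_by_attaching_leaves[OF assms(1) G T(1)]
  have "P (card (tree_leaves V T - X))" unfolding P_def .
  hence "Least P \<le> card (tree_leaves V T - X)" "P (Least P)" by (auto intro: Least_le LeastI)
  moreover have "matching_defect (V, A, X) \<le> int k" if "P k" for k
    using that matching_defect_le_attached_leaves[OF \<open>finite_net (V, A, X)\<close>] unfolding P_def by blast
  ultimately show ?thesis unfolding P_def[symmetric] using T(2) by fastforce
qed

lemma t_num_eq:
  assumes G: "rooted_digraph V A X r" and "acyclic A"
  shows "int (t_num V A X) = matching_defect (V, A, X)"
proof -
  have "finite A" using G finite_arcs unfolding rooted_digraph_def by metis
  define V0 :: "('a + nat) set" where "V0 = Inl ` V"
  define A0 :: "(('a + nat) \<times> ('a + nat)) set" where "A0 = map_prod Inl Inl ` A"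
  define X0 :: "('a + nat) set" where "X0 = Inl ` X"
  have G0: "rooted_digraph V0 A0 X0 (Inl r)"
    unfolding V0_def A0_def X0_def using G by (rule rooted_digraph_image[rotated]) simp
  have "wf A" using \<open>finite A\<close> \<open>acyclic A\<close> by (rule finite_acyclic_wf)
  hence "acyclic A0" unfolding A0_def by (intro wf_acyclic wf_map_prod_image) simp_all
  have "int (t_num V A X) = matching_defect (V0, A0, X0)"
    unfolding t_num_def lift_net_def V0_def[symmetric] A0_def[symmetric] X0_def[symmetric]
    using _ G0 \<open>acyclic A0\<close> by (rule Least_attach_leaf_tree_based) simp
  also have "\<dots> = matching_defect (V, A, X)"
    unfolding V0_def A0_def X0_def by (simp add: card_image arc_matching_number_map_prod)
  finally show ?thesis .
qed

theorem theorem5: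
  fixes V :: "'a set" and A :: "('a \<times> 'a) set" and X :: "'a set"
  assumes "phylo_network V A X"
  shows "int (l_num V A X) = p_num V A X \<and>
         p_num V A X = int (t_num V A X) \<and>
         int (t_num V A X) = (int (card V) - int (card X)) - int (max_matching_size (bip_edges A))"
proof -
  obtain r where G: "rooted_digraph V A X r" using assms by (rule phylo_network_rooted_digraph)
  have "acyclic A" using assms unfolding phylo_network_def by blast
  have "finite V" "A \<subseteq> V \<times> V" using G unfolding rooted_digraph_def by auto
  have "l_num V A X + card X + arc_matching_number A = card V"
    using G \<open>acyclic A\<close> by (rule l_num_add_arc_matching_number)
  moreover have "d_num V A + arc_matching_number A = card V"
    using \<open>finite V\<close> \<open>A \<subseteq> V \<times> V\<close> \<open>acyclic A\<close> by (rule d_num_add_arc_matching_number)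
  moreover have "int (t_num V A X) = matching_defect (V, A, X)"
    using G \<open>acyclic A\<close> by (rule t_num_eq)
  ultimately show ?thesis unfolding p_num_def max_matching_size_bip_edges by simp
qed

end
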